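(* For integers $a,t$ let $$f_{a,1,t}(X)=X^3+a^2(a^3-2)X^2-a(a^3-1)X+1+tX(aX-1)\in\mathbf{Z}[X].$$ There exists an integer $A\geq 1$ such that for all integers $t\geq 1$ and $a\geq A$, the polynomial $f_{a,1,t}(X)$ is irreducible over $\mathbf{Q}$. *)

theory Defs
  imports "HOL-Computational_Algebra.Polynomial_Factorial"
begin

definition f_poly :: "int \<Rightarrow> int \<Rightarrow> int poly" where
  "f_poly a t = [:1, 0, 0, 1:] + smult (a^2 * (a^3 - 2)) [:0, 0, 1:]
      - smult (a * (a^3 - 1)) [:0, 1:] + smult t ([:0, 1:] * [:-1, a:])"

end

theory Submission
  imports Defs
begin

text \<open>A polynomial of degree at most 3 over a field is irreducible as soon as it has no root.
  Since \<open>f_poly a t\<close> is a monic cubic with integer coefficients and constant term 1,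
  the rational root theorem leaves only the candidates \<open>\<plusminus>1\<close>, and for \<open>a, t \<ge> 1\<close> both
  \<open>f(1)\<close> and \<open>f(-1)\<close> are positive. Hence \<open>A = 1\<close> already works.\<close>

lemma poly_map_poly_of_int:
  "poly (map_poly of_int p) (of_int x :: 'a::comm_ring_1) = of_int (poly p x)"
  by (induction p) (simp_all add: map_poly_pCons)

lemma rat_root_of_monic_int_poly:
  fixes p :: "int poly" and x :: rat
  assumes monic: "lead_coeff p = 1" and root: "poly (map_poly of_int p) x = 0"
  obtains n where "x = of_int n" and "n dvd coeff p 0"
proof -
  have "algebraic_int x"
    using monic root by (auto simp: algebraic_int_altdef_ipoly)
  then have "x \<in> \<int>"
    by (rule rational_algebraic_int_is_int) (cases x, simp add: Fract_of_int_quotient)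
  then obtain n where x: "x = of_int n"
    by (elim Ints_cases)
  have "poly p n = 0"
    using root by (simp add: x poly_map_poly_of_int)
  moreover obtain c q where p: "p = pCons c q"
    by (cases p)
  ultimately have "coeff p 0 = - (n * poly q n)"
    by (simp add: eq_neg_iff_add_eq_0)
  then have "n dvd coeff p 0"
    by simp
  with x show thesis
    by (rule that)
qed

lemma irreducible_no_roots_degree_le_3:
  fixes p :: "'a::field poly"
  assumes deg: "0 < degree p" "degree p \<le> 3" and no_root: "\<And>x. poly p x \<noteq> 0"
  shows "irreducible p"
proof (rule irreducibleI)
  show "p \<noteq> 0" and "\<not> p dvd 1"
    using deg(1) by (auto simp: is_unit_poly_iff)
next
  fix q r assume p: "p = q * r"
  have no_linear_factor: "degree s \<noteq> 1" if "s dvd p" for s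
  proof
    assume "degree s = 1"
    then obtain a b where "s = [:a, b:]" "b \<noteq> 0"
      by (metis degree1_coeffs)
    with \<open>s dvd p\<close> have "poly p (- a / b) = 0"
      by (auto elim!: dvdE)
    with no_root show False
      by blast
  qed
  have "q \<noteq> 0" "r \<noteq> 0"
    using p no_root by auto
  with p deg(2) have "degree q + degree r \<le> 3"
    by (simp add: degree_mult_eq)
  moreover have "q dvd p" "r dvd p"
    using p by simp_all
  then have "degree q \<noteq> 1" "degree r \<noteq> 1"
    using no_linear_factor by blast+
  ultimately have "degree q = 0 \<or> degree r = 0"
    by linarith
  then show "q dvd 1 \<or> r dvd 1"
    using \<open>q \<noteq> 0\<close> \<open>r \<noteq> 0\<close> by (auto simp: is_unit_iff_degree)
qed

lemma irreducible_of_int_poly_rational_root_test: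
  fixes p :: "int poly"
  assumes monic: "lead_coeff p = 1" and deg: "0 < degree p" "degree p \<le> 3"
    and no_int_root: "\<And>n. n dvd coeff p 0 \<Longrightarrow> poly p n \<noteq> 0"
  shows "irreducible (map_poly (of_int :: int \<Rightarrow> rat) p)"
proof (rule irreducible_no_roots_degree_le_3)
  have "degree (map_poly (of_int :: int \<Rightarrow> rat) p) = degree p"
    by (simp add: degree_map_poly)
  with deg show "0 < degree (map_poly (of_int :: int \<Rightarrow> rat) p)"
    and "degree (map_poly (of_int :: int \<Rightarrow> rat) p) \<le> 3"
    by simp_all
  show "poly (map_poly of_int p) x \<noteq> 0" for x :: rat
  proof
    assume "poly (map_poly of_int p) x = 0"
    with monic obtain n where "x = of_int n" "n dvd coeff p 0"
      by (rule rat_root_of_monic_int_poly)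
    with \<open>poly (map_poly of_int p) x = 0\<close> no_int_root show False
      by (simp add: poly_map_poly_of_int)
  qed
qed

lemma f_poly_pCons:
  "f_poly a t = [:1, - (a^4 - a + t), a^5 - 2 * a^2 + t * a, 1:]"
  unfolding f_poly_def by (simp add: algebra_simps eval_nat_numeral)

lemma poly_f_poly_1: "poly (f_poly a t) 1 = a^4 * (a - 1) - 2 * a^2 + a + 2 + t * (a - 1)"
  unfolding f_poly_pCons by (simp add: algebra_simps eval_nat_numeral)

lemma poly_f_poly_minus_1: "poly (f_poly a t) (-1) = a^4 * (a + 1) - 2 * a^2 - a + t * (a + 1)"
  unfolding f_poly_pCons by (simp add: algebra_simps eval_nat_numeral)

lemma poly_f_poly_1_pos:
  assumes a: "a \<ge> 1" and t: "t \<ge> 1"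
  shows "poly (f_poly a t) 1 > 0"
proof -
  have "2 * a^2 < a^4 * (a - 1) + a + 2"
  proof (cases "a = 1")
    case False
    with a have "4 \<le> a^2"
      using power_mono[of 2 a 2] by simp
    then have "4 * a^2 \<le> a^2 * a^2"
      by (intro mult_right_mono) simp_all
    also have "\<dots> = a^4"
      by (simp flip: power_add)
    also have "\<dots> \<le> a^4 * (a - 1)"
      using False a by (simp add: mult_le_cancel_left1)
    finally show ?thesis
      using a zero_le_power2[of a] by linarith
  qed simp
  moreover have "0 \<le> t * (a - 1)"
    using a t by simp
  ultimately show ?thesis
    unfolding poly_f_poly_1 by linarith
qed

lemma poly_f_poly_minus_1_pos:
  assumes a: "a \<ge> 1" and t: "t \<ge> 1"
  shows "poly (f_poly a t) (-1) > 0"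
proof -
  have "a^2 \<le> a^4" "a^4 \<le> a^4 * a"
    using a by (simp_all add: power_increasing mult_le_cancel_left1)
  then have "2 * a^2 \<le> a^4 * (a + 1)"
    unfolding distrib_left by linarith
  moreover have "a + 1 \<le> t * (a + 1)"
    using a t by (simp add: mult_le_cancel_right1)
  ultimately show ?thesis
    unfolding poly_f_poly_minus_1 by linarith
qed

theorem mainTheorem2:
  shows "\<exists>A::int. A \<ge> 1 \<and> (\<forall>t a. t \<ge> 1 \<longrightarrow> a \<ge> A \<longrightarrow>
           irreducible (map_poly (of_int :: int \<Rightarrow> rat) (f_poly a t)))"
proof (intro exI[of _ 1] conjI allI impI)
  fix t a :: int
  assume t: "t \<ge> 1" and a: "a \<ge> 1"
  show "irreducible (map_poly (of_int :: int \<Rightarrow> rat) (f_poly a t))"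
  proof (rule irreducible_of_int_poly_rational_root_test)
    show "lead_coeff (f_poly a t) = 1" "0 < degree (f_poly a t)" "degree (f_poly a t) \<le> 3"
      by (simp_all add: f_poly_pCons)
    fix n
    assume "n dvd coeff (f_poly a t) 0"
    then have "n = 1 \<or> n = -1"
      by (auto simp: f_poly_pCons zdvd1_eq abs_if split: if_splits)
    with poly_f_poly_1_pos[OF a t] poly_f_poly_minus_1_pos[OF a t] show "poly (f_poly a t) n \<noteq> 0"
      by auto
  qed
qed simp

end
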